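(* Let $\{G_i\}_{i\in I}$ be a family of Hausdorff topological groups. Assume that each $G_i$ contains a closed, extremely amenable, co-precompact subgroup $H_i$ such that the universal minimal flow of $G_i$ is (isomorphic, as a $G_i$-flow, to) the completion $\widehat{G_i/H_i}$. Then the universal minimal flow of the product group commutes with the product: $$\mathrm{UMF}\Big(\prod_{i} G_i\Big) = \prod_{i} \mathrm{UMF}(G_i).$$
   Context: A flow of a topological group $G$ is a nonempty compact (Hausdorff) space with a jointly continuous $G$-action; it is minimal if every orbit is dense. The universal minimal flow $\mathrm{UMF}(G)$ is the (unique up to isomorphism) minimal flow admitting a $G$-equivariant continuous surjection onto every minimal flow. A topological group is extremely amenable if every continuous action on a nonempty compact space has a fixed point. The right uniform structure on $G$ has basis of entourages $\{(x,y) \mid x\in Uy\}$, $U$ ranging over identity neighbourhoods. A closed subgroup $H\le G$ is co-precompact if the coset space $G/H$, endowed with the quotient of the right uniform structure of $G$, is precompact; $\widehat{G/H}$ denotes its (Hausdorff) completion, a compact $G$-space. *)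

theory Defs
  imports "HOL-Analysis.Analysis" "HOL-Algebra.Product_Groups"
begin

definition topological_group :: "'g monoid \<Rightarrow> 'g topology \<Rightarrow> bool" where
  "topological_group G T \<longleftrightarrow>
     group G \<and> topspace T = carrier G \<and>
     continuous_map (prod_topology T T) T (\<lambda>(x, y). x \<otimes>\<^bsub>G\<^esub> y) \<and>
     continuous_map T T (\<lambda>x. inv\<^bsub>G\<^esub> x)"

definition hausdorff_topological_group :: "'g monoid \<Rightarrow> 'g topology \<Rightarrow> bool" where
  "hausdorff_topological_group G T \<longleftrightarrow> topological_group G T \<and> Hausdorff_space T"

definition flow :: "'g monoid \<Rightarrow> 'g topology \<Rightarrow> 'x topology \<Rightarrow> ('g \<Rightarrow> 'x \<Rightarrow> 'x) \<Rightarrow> bool" where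
  "flow G T X act \<longleftrightarrow>
     topspace X \<noteq> {} \<and> compact_space X \<and> Hausdorff_space X \<and>
     (\<forall>g\<in>carrier G. \<forall>x\<in>topspace X. act g x \<in> topspace X) \<and>
     (\<forall>x\<in>topspace X. act \<one>\<^bsub>G\<^esub> x = x) \<and>
     (\<forall>g\<in>carrier G. \<forall>h\<in>carrier G. \<forall>x\<in>topspace X.
        act (g \<otimes>\<^bsub>G\<^esub> h) x = act g (act h x)) \<and>
     continuous_map (prod_topology T X) X (\<lambda>(g, x). act g x)"

definition minimal_flow :: "'g monoid \<Rightarrow> 'g topology \<Rightarrow> 'x topology \<Rightarrow> ('g \<Rightarrow> 'x \<Rightarrow> 'x) \<Rightarrow> bool" where
  "minimal_flow G T X act \<longleftrightarrow>
     flow G T X act \<and>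
     (\<forall>x\<in>topspace X. X closure_of ((\<lambda>g. act g x) ` carrier G) = topspace X)"

definition flow_hom :: "'g monoid \<Rightarrow> 'x topology \<Rightarrow> ('g \<Rightarrow> 'x \<Rightarrow> 'x) \<Rightarrow>
                        'y topology \<Rightarrow> ('g \<Rightarrow> 'y \<Rightarrow> 'y) \<Rightarrow> ('x \<Rightarrow> 'y) \<Rightarrow> bool" where
  "flow_hom G X actX Y actY f \<longleftrightarrow>
     continuous_map X Y f \<and>
     (\<forall>g\<in>carrier G. \<forall>x\<in>topspace X. f (actX g x) = actY g (f x))"

text \<open>Since a minimal flow of G is a
  compact Hausdorff space with a dense subset (an orbit) of size at most |G|, it has cardinality
  at most 2^2^|G|, hence every minimal flow is isomorphic to one carried by
  'g set set; so this is equivalent to quantifying over all minimal flows.\<close>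

definition is_UMF :: "'g monoid \<Rightarrow> 'g topology \<Rightarrow> 'x topology \<Rightarrow> ('g \<Rightarrow> 'x \<Rightarrow> 'x) \<Rightarrow> bool" where
  "is_UMF G T X act \<longleftrightarrow>
     minimal_flow G T X act \<and>
     (\<forall>(Y :: 'g set set topology) actY. minimal_flow G T Y actY \<longrightarrow>
        (\<exists>f. flow_hom G X act Y actY f \<and> f ` topspace X = topspace Y))"

text \<open>As above it suffices to consider flows on 'g set set
  (every flow contains a minimal subflow, of cardinality at most 2^2^|H|).\<close>

definition extremely_amenable_subgroup :: "'g monoid \<Rightarrow> 'g topology \<Rightarrow> 'g set \<Rightarrow> bool" where
  "extremely_amenable_subgroup G T H \<longleftrightarrow>
     (\<forall>(Y :: 'g set set topology) act.
        flow (G\<lparr>carrier := H\<rparr>) (subtopology T H) Y act \<longrightarrow>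
        (\<exists>y\<in>topspace Y. \<forall>h\<in>H. act h y = y))"

text \<open>The quotient of the right uniformity (entourages {(x,y) | x \<in> U y}) on G/H (left cosets)
  has basic entourages {(xH,yH) | x \<in> U y H}; precompactness of G/H means:
  for every open identity neighbourhood U there is a finite F \<subseteq> G with G = U F H.\<close>

definition co_precompact :: "'g monoid \<Rightarrow> 'g topology \<Rightarrow> 'g set \<Rightarrow> bool" where
  "co_precompact G T H \<longleftrightarrow>
     (\<forall>U. openin T U \<and> \<one>\<^bsub>G\<^esub> \<in> U \<longrightarrow>
        (\<exists>F. finite F \<and> F \<subseteq> carrier G \<and>
             carrier G = {u \<otimes>\<^bsub>G\<^esub> f \<otimes>\<^bsub>G\<^esub> h | u f h. u \<in> U \<and> f \<in> F \<and> h \<in> H}))"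

text \<open>(K, act, j) is (isomorphic to) the completion of G/H: K is a G-flow (compact Hausdorff,
  carrying its unique uniformity, whose entourages are the neighbourhoods of the diagonal),
  j : G \<rightarrow> K is constant exactly on left cosets of H (so it is an injective map G/H \<rightarrow> K),
  G-equivariant for left translation, has dense image, and is a uniform embedding of G/H with
  the quotient of the right uniformity.\<close>

definition completion_flow ::
  "'g monoid \<Rightarrow> 'g topology \<Rightarrow> 'g set \<Rightarrow> 'x topology \<Rightarrow> ('g \<Rightarrow> 'x \<Rightarrow> 'x) \<Rightarrow> ('g \<Rightarrow> 'x) \<Rightarrow> bool" where
  "completion_flow G T H K act j \<longleftrightarrow>
     flow G T K act \<and>
     j \<in> carrier G \<rightarrow> topspace K \<and>
     (\<forall>x\<in>carrier G. \<forall>y\<in>carrier G. j x = j y \<longleftrightarrow> inv\<^bsub>G\<^esub> x \<otimes>\<^bsub>G\<^esub> y \<in> H) \<and>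
     (\<forall>g\<in>carrier G. \<forall>x\<in>carrier G. act g (j x) = j (g \<otimes>\<^bsub>G\<^esub> x)) \<and>
     K closure_of (j ` carrier G) = topspace K \<and>
     (\<forall>W. openin (prod_topology K K) W \<and> (\<forall>z\<in>topspace K. (z, z) \<in> W) \<longrightarrow>
        (\<exists>U. openin T U \<and> \<one>\<^bsub>G\<^esub> \<in> U \<and>
             (\<forall>x\<in>carrier G. \<forall>y\<in>carrier G. \<forall>u\<in>U. x = u \<otimes>\<^bsub>G\<^esub> y \<longrightarrow> (j x, j y) \<in> W))) \<and>
     (\<forall>U. openin T U \<and> \<one>\<^bsub>G\<^esub> \<in> U \<longrightarrow>
        (\<exists>W. openin (prod_topology K K) W \<and> (\<forall>z\<in>topspace K. (z, z) \<in> W) \<and>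
             (\<forall>x\<in>carrier G. \<forall>y\<in>carrier G. (j x, j y) \<in> W \<longrightarrow>
                (\<exists>u\<in>U. \<exists>h\<in>H. x = u \<otimes>\<^bsub>G\<^esub> y \<otimes>\<^bsub>G\<^esub> h))))"

definition product_action :: "'i set \<Rightarrow> ('i \<Rightarrow> 'g \<Rightarrow> 'x \<Rightarrow> 'x) \<Rightarrow> ('i \<Rightarrow> 'g) \<Rightarrow> ('i \<Rightarrow> 'x) \<Rightarrow> ('i \<Rightarrow> 'x)" where
  "product_action I act g x = (\<lambda>i\<in>I. act i (g i) (x i))"

end

theory Submission
  imports Defs
begin

(* The product of the subgroups H_i is extremely amenable: a point fixed by the H_i with i in a
   finite set J can be improved to one fixed also by H_k, by applying extreme amenability of H_k
   inside the closure of its orbit, which stays fixed by the H_i (i in J) as these commute with H_k.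
   By compactness some point is fixed by all finitely supported elements of the product of the H_i,
   hence, these being dense and stabilisers closed, by the whole product.
   Now let Y be a minimal flow of the product group G with a point y0 fixed by the product H.
   The closure of the set of pairs (j g, g y0) in K x Y, K the product of the K_i, is the graph of
   a map: if j g and j g' are close then g lies in U g' H for a small neighbourhood U of the
   identity, and H fixes y0. Compactness makes this map continuous and defined everywhere; it is
   equivariant, and onto since Y is minimal. As K is itself minimal, it is the universal minimal flow. *)

lemma flow_topspace_nonempty: "flow G T X act \<Longrightarrow> topspace X \<noteq> {}"
  unfolding flow_def by blast

lemma flow_act_closed:
  "flow G T X act \<Longrightarrow> g \<in> carrier G \<Longrightarrow> x \<in> topspace X \<Longrightarrow> act g x \<in> topspace X"
  unfolding flow_def by blast

lemma flow_act_one: "flow G T X act \<Longrightarrow> x \<in> topspace X \<Longrightarrow> act \<one>\<^bsub>G\<^esub> x = x"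
  unfolding flow_def by blast

lemma flow_act_mult:
  "flow G T X act \<Longrightarrow> g \<in> carrier G \<Longrightarrow> h \<in> carrier G \<Longrightarrow> x \<in> topspace X \<Longrightarrow>
     act (g \<otimes>\<^bsub>G\<^esub> h) x = act g (act h x)"
  unfolding flow_def by blast

lemma flow_continuous_action:
  "flow G T X act \<Longrightarrow> continuous_map (prod_topology T X) X (\<lambda>(g, x). act g x)"
  unfolding flow_def by blast

lemma minimal_flowD:
  assumes "minimal_flow G T X act"
  shows "flow G T X act"
    and "x \<in> topspace X \<Longrightarrow> X closure_of ((\<lambda>g. act g x) ` carrier G) = topspace X"
  using assms unfolding minimal_flow_def by blast+

lemma flow_act_continuous:
  assumes "flow G T X act" "g \<in> topspace T"
  shows "continuous_map X X (act g)"
proof -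
  have "continuous_map X (prod_topology T X) (\<lambda>x. (g, x))"
    using assms(2) by (intro continuous_map_pairedI) auto
  from continuous_map_compose[OF this flow_continuous_action[OF assms(1)]]
  show ?thesis
    by (simp add: o_def)
qed

lemma flow_orbit_map_continuous:
  assumes "flow G T X act" "x \<in> topspace X"
  shows "continuous_map T X (\<lambda>g. act g x)"
proof -
  have "continuous_map T (prod_topology T X) (\<lambda>g. (g, x))"
    using assms(2) by (intro continuous_map_pairedI) auto
  from continuous_map_compose[OF this flow_continuous_action[OF assms(1)]]
  show ?thesis
    by (simp add: o_def)
qed

lemma flow_act_continuous_at_one:
  assumes "flow G T X act" "\<one>\<^bsub>G\<^esub> \<in> topspace T" "openin X V" "y \<in> V"
  obtains U V' where "openin T U" "\<one>\<^bsub>G\<^esub> \<in> U" "openin X V'" "y \<in> V'"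
    "\<And>g z. g \<in> U \<Longrightarrow> z \<in> V' \<Longrightarrow> act g z \<in> V"
proof -
  let ?P = "{p \<in> topspace (prod_topology T X). (\<lambda>(g, x). act g x) p \<in> V}"
  have "openin (prod_topology T X) ?P"
    using openin_continuous_map_preimage[OF flow_continuous_action[OF assms(1)] assms(3)] .
  moreover have "y \<in> topspace X"
    using assms(3,4) openin_subset by blast
  then have "(\<one>\<^bsub>G\<^esub>, y) \<in> ?P"
    using assms(2,4) flow_act_one[OF assms(1)] by simp
  ultimately have "\<exists>U V'. openin T U \<and> openin X V' \<and> \<one>\<^bsub>G\<^esub> \<in> U \<and> y \<in> V' \<and> U \<times> V' \<subseteq> ?P"
    by (rule openin_prod_topology_alt[THEN iffD1, rule_format])
  then obtain U V' where UV: "openin T U" "openin X V'" "\<one>\<^bsub>G\<^esub> \<in> U" "y \<in> V'" "U \<times> V' \<subseteq> ?P"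
    by blast
  have "act g z \<in> V" if "g \<in> U" "z \<in> V'" for g z
  proof -
    have "(g, z) \<in> ?P"
      using UV(5) that by (rule subsetD[OF _ SigmaI])
    then show ?thesis
      by simp
  qed
  then show thesis
    by (rule that[OF UV(1,3,2,4)])
qed

lemma closedin_stabilizer:
  assumes "flow G T X act" "x \<in> topspace X"
  shows "closedin T {g \<in> topspace T. act g x = x}"
proof -
  have "Hausdorff_space X" "continuous_map T X (\<lambda>g. x)"
    using assms by (simp_all add: flow_def)
  from closedin_continuous_maps_eq[OF this(1) flow_orbit_map_continuous[OF assms] this(2)]
  show ?thesis .
qed

definition fixed_points :: "'x topology \<Rightarrow> ('g \<Rightarrow> 'x \<Rightarrow> 'x) \<Rightarrow> 'g set \<Rightarrow> 'x set" where
  "fixed_points X act S = {x \<in> topspace X. \<forall>g\<in>S. act g x = x}"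

lemma fixed_points_antimono: "S \<subseteq> S' \<Longrightarrow> fixed_points X act S' \<subseteq> fixed_points X act S"
  unfolding fixed_points_def by blast

lemma closedin_fixed_points:
  assumes "flow G T X act" "S \<subseteq> topspace T"
  shows "closedin X (fixed_points X act S)"
proof -
  have closed: "closedin X {x \<in> topspace X. act g x = id x}" if "g \<in> S" for g
  proof -
    have "Hausdorff_space X"
      using assms(1) by (simp add: flow_def)
    from closedin_continuous_maps_eq[OF this flow_act_continuous[OF assms(1)] continuous_map_id]
    show ?thesis
      using that assms(2) by blast
  qed
  have "fixed_points X act S = \<Inter> (insert (topspace X) ((\<lambda>g. {x \<in> topspace X. act g x = id x}) ` S))"
    by (auto simp: fixed_points_def)
  also have "closedin X \<dots>"
    using closed by (intro closedin_Inter) auto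
  finally show ?thesis .
qed

lemma image_closure_of_invariant:
  assumes "continuous_map X X f" "f ` S \<subseteq> S"
  shows "f ` (X closure_of S) \<subseteq> X closure_of S"
  using continuous_map_image_closure_subset[OF assms(1)] closure_of_mono[OF assms(2)] by blast

lemma flow_pullback:
  assumes "flow G T X act" "\<phi> \<in> carrier G' \<rightarrow> carrier G" "\<phi> \<one>\<^bsub>G'\<^esub> = \<one>\<^bsub>G\<^esub>"
    "\<And>a b. a \<in> carrier G' \<Longrightarrow> b \<in> carrier G' \<Longrightarrow> \<phi> (a \<otimes>\<^bsub>G'\<^esub> b) = \<phi> a \<otimes>\<^bsub>G\<^esub> \<phi> b"
    "continuous_map T' T \<phi>"
  shows "flow G' T' X (\<lambda>a. act (\<phi> a))"
proof -
  have "continuous_map (prod_topology T' X) (prod_topology T X) (\<lambda>(a, x). (\<phi> a, x))"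
    using assms(5) by (simp add: continuous_map_prod_top)
  from continuous_map_compose[OF this flow_continuous_action[OF assms(1)]]
  have "continuous_map (prod_topology T' X) X (\<lambda>(a, x). act (\<phi> a) x)"
    by (simp add: o_def case_prod_unfold)
  with assms show ?thesis
    by (simp add: flow_def Pi_iff)
qed

lemma flow_restrict:
  assumes "flow G T X act" "S \<subseteq> carrier G"
  shows "flow (G\<lparr>carrier := S\<rparr>) (subtopology T S) X act"
  using flow_pullback[OF assms(1), of "\<lambda>a. a" "G\<lparr>carrier := S\<rparr>" "subtopology T S"] assms(2)
  by (auto simp: continuous_map_from_subtopology)

lemma flow_orbit_closure:
  assumes "flow G T X act" "monoid G" "topspace T = carrier G" "x \<in> topspace X"
  defines "C \<equiv> X closure_of ((\<lambda>g. act g x) ` carrier G)"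
  shows "flow G T (subtopology X C) act"
    and "subtopology X C closure_of ((\<lambda>g. act g x) ` carrier G) = topspace (subtopology X C)"
proof -
  have orbit: "(\<lambda>g. act g x) ` carrier G \<subseteq> topspace X"
    using flow_act_closed[OF assms(1) _ assms(4)] by blast
  then have orbit_C: "(\<lambda>g. act g x) ` carrier G \<subseteq> C"
    unfolding C_def by (rule closure_of_subset)
  have tsC: "topspace (subtopology X C) = C"
    by (simp add: C_def closure_of_subset_topspace Int_absorb1)
  have "act g ` (\<lambda>h. act h x) ` carrier G \<subseteq> (\<lambda>h. act h x) ` carrier G" if "g \<in> carrier G" for g
  proof -
    have "act g (act h x) = act (g \<otimes>\<^bsub>G\<^esub> h) x" if "h \<in> carrier G" for h
      using flow_act_mult[OF assms(1) \<open>g \<in> carrier G\<close> that assms(4)] by simp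
    then show ?thesis
      using monoid.m_closed[OF assms(2) that] by auto
  qed
  then have invariant: "act g ` C \<subseteq> C" if "g \<in> carrier G" for g
    unfolding C_def using that assms(3) flow_act_continuous[OF assms(1)]
    by (simp add: image_closure_of_invariant)
  have "continuous_map (prod_topology T (subtopology X C)) X (\<lambda>(g, x). act g x)"
    using continuous_map_from_subtopology[OF flow_continuous_action[OF assms(1)], of "topspace T \<times> C"]
    by (simp add: subtopology_Times)
  then have cont: "continuous_map (prod_topology T (subtopology X C)) (subtopology X C) (\<lambda>(g, x). act g x)"
    using invariant assms(3) tsC
    by (intro continuous_map_into_subtopology) (auto simp: image_subset_iff)
  show "flow G T (subtopology X C) act"
    unfolding flow_def
  proof (intro conjI cont)
    show "topspace (subtopology X C) \<noteq> {}"
      using orbit_C monoid.one_closed[OF assms(2)] tsC by blast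
    show "compact_space (subtopology X C)"
      using assms(1) by (simp add: C_def flow_def closedin_compact_space compact_space_subtopology)
    show "Hausdorff_space (subtopology X C)"
      using assms(1) by (simp add: flow_def Hausdorff_space_subtopology)
    show "\<forall>g\<in>carrier G. \<forall>y\<in>topspace (subtopology X C). act g y \<in> topspace (subtopology X C)"
      using invariant tsC by blast
    show "\<forall>y\<in>topspace (subtopology X C). act \<one>\<^bsub>G\<^esub> y = y"
      using flow_act_one[OF assms(1)] by simp
    show "\<forall>g\<in>carrier G. \<forall>h\<in>carrier G. \<forall>y\<in>topspace (subtopology X C).
        act (g \<otimes>\<^bsub>G\<^esub> h) y = act g (act h y)"
      using flow_act_mult[OF assms(1)] by simp
  qed
  have "subtopology X C closure_of ((\<lambda>g. act g x) ` carrier G)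
        = C \<inter> X closure_of (C \<inter> (\<lambda>g. act g x) ` carrier G)"
    by (rule closure_of_subtopology)
  also have "\<dots> = C"
    using orbit_C by (simp only: Int_absorb1 Int_absorb2 C_def Int_absorb)
  finally show "subtopology X C closure_of ((\<lambda>g. act g x) ` carrier G) = topspace (subtopology X C)"
    unfolding tsC .
qed

section \<open>Extreme amenability for flows on arbitrary carriers\<close>

lemma homeomorphic_maps_pullback_inv_into:
  assumes "inj_on \<phi> (topspace Z)"
  shows "homeomorphic_maps Z (pullback_topology (\<phi> ` topspace Z) (inv_into (topspace Z) \<phi>) Z)
           \<phi> (inv_into (topspace Z) \<phi>)"
    (is "homeomorphic_maps Z ?Z' \<phi> ?\<psi>")
proof -
  have inverse: "?\<psi> (\<phi> x) = x" if "x \<in> topspace Z" for x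
    using assms that by simp
  then have topspace: "topspace ?Z' = \<phi> ` topspace Z"
    by (auto simp: topspace_pullback_topology)
  have "continuous_map ?Z' Z ?\<psi>"
    using continuous_map_pullback[OF continuous_map_id[of Z], of "\<phi> ` topspace Z" ?\<psi>]
    by (simp only: id_comp)
  moreover have "continuous_map Z ?Z' \<phi>"
  proof (rule continuous_map_pullback')
    show "continuous_map Z Z (?\<psi> \<circ> \<phi>)"
      using continuous_map_id by (rule continuous_map_eq) (simp add: inverse)
  qed auto
  ultimately show ?thesis
    unfolding homeomorphic_maps_def using topspace inverse by auto
qed

lemma flow_homeomorphic_maps:
  assumes "flow G T Z act" "homeomorphic_maps Z Z' \<phi> \<psi>"
  shows "flow G T Z' (\<lambda>g w. \<phi> (act g (\<psi> w)))"
proof -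
  have \<phi>: "continuous_map Z Z' \<phi>" and \<psi>: "continuous_map Z' Z \<psi>"
    and \<psi>\<phi>: "\<And>x. x \<in> topspace Z \<Longrightarrow> \<psi> (\<phi> x) = x"
    and \<phi>\<psi>: "\<And>w. w \<in> topspace Z' \<Longrightarrow> \<phi> (\<psi> w) = w"
    using assms(2) by (auto simp: homeomorphic_maps_def)
  have homeomorphic: "Z homeomorphic_space Z'"
    using assms(2) homeomorphic_space_def by blast
  have "continuous_map (prod_topology T Z') (prod_topology T Z) (\<lambda>(g, w). (g, \<psi> w))"
    using \<psi> by (simp add: continuous_map_prod_top)
  from continuous_map_compose[OF continuous_map_compose[OF this flow_continuous_action[OF assms(1)]] \<phi>]
  have "continuous_map (prod_topology T Z') Z' (\<lambda>(g, w). \<phi> (act g (\<psi> w)))"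
    by (simp add: o_def case_prod_unfold)
  moreover have "\<psi> w \<in> topspace Z" if "w \<in> topspace Z'" for w
    using \<psi> that by (simp add: continuous_map_def Pi_iff)
  moreover have "\<phi> x \<in> topspace Z'" if "x \<in> topspace Z" for x
    using \<phi> that by (simp add: continuous_map_def Pi_iff)
  moreover have "topspace Z \<noteq> {}"
    by (rule flow_topspace_nonempty[OF assms(1)])
  then have "topspace Z' \<noteq> {}"
    using \<open>\<And>x. x \<in> topspace Z \<Longrightarrow> \<phi> x \<in> topspace Z'\<close> by blast
  ultimately show ?thesis
    using assms(1) \<phi>\<psi> homeomorphic_compact_space[OF homeomorphic] homeomorphic_Hausdorff_space[OF homeomorphic]
      \<psi>\<phi> flow_act_closed[OF assms(1)] flow_act_one[OF assms(1)] flow_act_mult[OF assms(1)]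
    by (simp add: flow_def)
qed

lemma extremely_amenable_subgroup_fixed_point:
  fixes G :: "'g monoid" and Z :: "'z topology"
  assumes "extremely_amenable_subgroup G T H"
    and flow: "flow (G\<lparr>carrier := H\<rparr>) (subtopology T H) Z act"
    and "y \<in> topspace Z" and dense: "Z closure_of ((\<lambda>a. act a y) ` H) = topspace Z"
  obtains z where "z \<in> topspace Z" "\<And>h. h \<in> H \<Longrightarrow> act h z = z"
proof -
  (* extremely_amenable_subgroup only speaks about flows carried by 'g set set. A point is coded by
     the traces on H of its open neighbourhoods along the orbit of y; the code is injective because
     the orbit is dense and Z is Hausdorff. *)
  define \<phi> :: "'z \<Rightarrow> 'g set set" where
    "\<phi> x = {{a \<in> H. act a y \<in> N} | N. openin Z N \<and> x \<in> N}" for x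
  have "inj_on \<phi> (topspace Z)"
  proof (rule inj_onI, rule ccontr)
    fix x1 x2 assume x: "x1 \<in> topspace Z" "x2 \<in> topspace Z" "\<phi> x1 = \<phi> x2" "x1 \<noteq> x2"
    have "Hausdorff_space Z"
      using flow by (simp add: flow_def)
    then obtain N1 N2 where N12: "openin Z N1" "openin Z N2" "x1 \<in> N1" "x2 \<in> N2" "disjnt N1 N2"
      using x(1,2,4) unfolding Hausdorff_space_def by blast
    have "{a \<in> H. act a y \<in> N1} \<in> \<phi> x1"
      using N12 unfolding \<phi>_def by blast
    then have "{a \<in> H. act a y \<in> N1} \<in> \<phi> x2"
      using x(3) by simp
    then obtain N where N: "openin Z N" "x2 \<in> N" "{a \<in> H. act a y \<in> N1} = {a \<in> H. act a y \<in> N}"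
      unfolding \<phi>_def by (auto simp only: mem_Collect_eq)
    have "x2 \<in> Z closure_of ((\<lambda>a. act a y) ` H)"
      using dense x(2) by simp
    moreover have "openin Z (N \<inter> N2)" "x2 \<in> N \<inter> N2"
      using N N12 by auto
    ultimately obtain a where a: "a \<in> H" "act a y \<in> N" "act a y \<in> N2"
      unfolding in_closure_of by blast
    then have "a \<in> {a \<in> H. act a y \<in> N1}"
      unfolding N(3) by simp
    then show False
      using a(3) N12(5) by (simp add: disjnt_iff)
  qed
  define \<psi> where "\<psi> = inv_into (topspace Z) \<phi>"
  define Z' where "Z' = pullback_topology (\<phi> ` topspace Z) \<psi> Z"
  have homeomorphic: "homeomorphic_maps Z Z' \<phi> \<psi>"
    unfolding Z'_def \<psi>_def by (rule homeomorphic_maps_pullback_inv_into) fact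
  have "flow (G\<lparr>carrier := H\<rparr>) (subtopology T H) Z' (\<lambda>g w. \<phi> (act g (\<psi> w)))"
    using flow homeomorphic by (rule flow_homeomorphic_maps)
  then obtain w where w: "w \<in> topspace Z'" "\<forall>h\<in>H. \<phi> (act h (\<psi> w)) = w"
    using assms(1)[unfolded extremely_amenable_subgroup_def, rule_format] by blast
  have \<psi>w: "\<psi> w \<in> topspace Z"
    using homeomorphic w(1) by (auto simp: homeomorphic_maps_def continuous_map_def)
  have \<psi>\<phi>: "\<And>x. x \<in> topspace Z \<Longrightarrow> \<psi> (\<phi> x) = x"
    using homeomorphic by (simp add: homeomorphic_maps_def)
  show thesis
  proof (rule that[OF \<psi>w])
    fix h assume "h \<in> H"
    then have "act h (\<psi> w) \<in> topspace Z"
      using flow_act_closed[OF flow] \<psi>w by simp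
    then show "act h (\<psi> w) = \<psi> w"
      using \<psi>\<phi> w(2) \<open>h \<in> H\<close> by metis
  qed
qed

lemma image_componentwise_PiE:
  "(\<lambda>g. \<lambda>i\<in>I. F i (g i)) ` PiE I A = PiE I (\<lambda>i. F i ` A i)"
proof
  show "(\<lambda>g. \<lambda>i\<in>I. F i (g i)) ` PiE I A \<subseteq> PiE I (\<lambda>i. F i ` A i)"
    by (auto simp: PiE_iff)
  show "PiE I (\<lambda>i. F i ` A i) \<subseteq> (\<lambda>g. \<lambda>i\<in>I. F i (g i)) ` PiE I A"
  proof
    fix z assume z: "z \<in> PiE I (\<lambda>i. F i ` A i)"
    then obtain c where c: "\<And>i. i \<in> I \<Longrightarrow> c i \<in> A i \<and> z i = F i (c i)"
      by (simp add: PiE_iff image_iff) metis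
    then have "restrict c I \<in> PiE I A" and "z = (\<lambda>i\<in>I. F i (restrict c I i))"
      using z by (auto simp: PiE_iff extensional_def)
    then show "z \<in> (\<lambda>g. \<lambda>i\<in>I. F i (g i)) ` PiE I A"
      by blast
  qed
qed

lemma flow_product:
  assumes "\<And>i. i \<in> I \<Longrightarrow> flow (G i) (T i) (K i) (act i)"
  shows "flow (product_group I G) (product_topology T I) (product_topology K I) (product_action I act)"
  unfolding flow_def
proof (intro conjI ballI)
  show "topspace (product_topology K I) \<noteq> {}"
    using assms by (auto simp: flow_def PiE_eq_empty_iff)
  show "compact_space (product_topology K I)"
    using assms by (auto simp: flow_def compact_space_product_topology)
  show "Hausdorff_space (product_topology K I)"
    using assms by (auto simp: flow_def Hausdorff_space_product_topology)
  show "product_action I act g x \<in> topspace (product_topology K I)"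
    if "g \<in> carrier (product_group I G)" "x \<in> topspace (product_topology K I)" for g x
    using that flow_act_closed[OF assms] by (auto simp: product_action_def PiE_iff)
  show "product_action I act \<one>\<^bsub>product_group I G\<^esub> x = x"
    if "x \<in> topspace (product_topology K I)" for x
    using that flow_act_one[OF assms] by (auto simp: product_action_def PiE_iff extensional_def)
  show "product_action I act (g \<otimes>\<^bsub>product_group I G\<^esub> h) x
          = product_action I act g (product_action I act h x)"
    if "g \<in> carrier (product_group I G)" "h \<in> carrier (product_group I G)"
      "x \<in> topspace (product_topology K I)" for g h x
    using that flow_act_mult[OF assms] flow_act_closed[OF assms]
    by (auto simp: product_action_def PiE_iff)
  show "continuous_map (prod_topology (product_topology T I) (product_topology K I))
          (product_topology K I) (\<lambda>(g, x). product_action I act g x)"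
    unfolding continuous_map_componentwise
  proof (intro conjI ballI)
    fix k assume "k \<in> I"
    have "continuous_map (prod_topology (product_topology T I) (product_topology K I))
            (prod_topology (T k) (K k)) (\<lambda>(g, x). (g k, x k))"
      using \<open>k \<in> I\<close> by (simp add: continuous_map_prod_top continuous_map_product_projection)
    from continuous_map_compose[OF this flow_continuous_action[OF assms[OF \<open>k \<in> I\<close>]]]
    show "continuous_map (prod_topology (product_topology T I) (product_topology K I)) (K k)
            (\<lambda>p. (case p of (g, x) \<Rightarrow> product_action I act g x) k)"
      using \<open>k \<in> I\<close> by (simp add: o_def case_prod_unfold product_action_def)
  qed (auto simp: product_action_def)
qed

lemma minimal_flow_product:
  assumes "\<And>i. i \<in> I \<Longrightarrow> minimal_flow (G i) (T i) (K i) (act i)"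
  shows "minimal_flow (product_group I G) (product_topology T I) (product_topology K I) (product_action I act)"
  unfolding minimal_flow_def
proof (intro conjI ballI)
  show "flow (product_group I G) (product_topology T I) (product_topology K I) (product_action I act)"
    using assms by (intro flow_product minimal_flowD)
  fix x assume x: "x \<in> topspace (product_topology K I)"
  have "(\<lambda>g. product_action I act g x) ` carrier (product_group I G)
          = PiE I (\<lambda>i. (\<lambda>a. act i a (x i)) ` carrier (G i))"
    unfolding product_action_def carrier_product_group by (rule image_componentwise_PiE)
  moreover have "K i closure_of ((\<lambda>a. act i a (x i)) ` carrier (G i)) = topspace (K i)" if "i \<in> I" for i
    using minimal_flowD(2)[OF assms[OF that]] x that by (simp add: PiE_iff)
  ultimately show "product_topology K I closure_of (\<lambda>g. product_action I act g x) ` carrier (product_group I G)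
      = topspace (product_topology K I)"
    by (simp add: closure_of_product_topology cong: PiE_cong)
qed

section \<open>Fixed points of a product of extremely amenable subgroups\<close>

lemma closure_of_finite_support:
  assumes "e \<in> topspace (product_topology X I)"
  shows "product_topology X I closure_of {x \<in> topspace (product_topology X I). finite {i \<in> I. x i \<noteq> e i}}
           = topspace (product_topology X I)"
proof -
  let ?F = "{x \<in> topspace (product_topology X I). finite {i \<in> I. x i \<noteq> e i}}"
  have "x \<in> product_topology X I closure_of ?F" if x: "x \<in> topspace (product_topology X I)" for x
    unfolding in_closure_of
  proof (intro conjI allI impI)
    fix U assume U: "x \<in> U \<and> openin (product_topology X I) U"
    obtain V where V: "finite {i \<in> I. V i \<noteq> topspace (X i)}" "\<forall>i\<in>I. openin (X i) (V i)"
      "x \<in> PiE I V" "PiE I V \<subseteq> U"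
      using openin_product_topology_alt[THEN iffD1, rule_format, of X I U x] U by blast
    define x' where "x' = (\<lambda>i\<in>I. if V i = topspace (X i) then e i else x i)"
    have "x' \<in> PiE I V"
      using V(3) assms by (auto simp: x'_def PiE_iff)
    moreover have "{i \<in> I. x' i \<noteq> e i} \<subseteq> {i \<in> I. V i \<noteq> topspace (X i)}"
      by (auto simp: x'_def)
    then have "finite {i \<in> I. x' i \<noteq> e i}"
      using V(1) by (rule finite_subset)
    moreover have "x' \<in> topspace (product_topology X I)"
      using x assms by (auto simp: x'_def PiE_iff)
    ultimately show "\<exists>y. y \<in> ?F \<and> y \<in> U"
      using V(4) by blast
  qed (rule x)
  then show ?thesis
    by (meson closure_of_subset_topspace subsetI subset_antisym)
qed

lemma product_group_mult_one_upd:
  assumes "\<And>i. i \<in> I \<Longrightarrow> monoid (G i)" "k \<in> I"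
    "h \<in> carrier (product_group I G)" "a \<in> carrier (G k)"
  shows "h \<otimes>\<^bsub>product_group I G\<^esub> (\<one>\<^bsub>product_group I G\<^esub>)(k := a) = h(k := h k \<otimes>\<^bsub>G k\<^esub> a)"
    and "(\<one>\<^bsub>product_group I G\<^esub>)(k := a) \<otimes>\<^bsub>product_group I G\<^esub> h = h(k := a \<otimes>\<^bsub>G k\<^esub> h k)"
  using assms monoid.l_one monoid.r_one
  by (fastforce simp: fun_eq_iff PiE_iff extensional_def)+

context
  fixes I :: "'i set" and G :: "'i \<Rightarrow> 'g monoid" and T :: "'i \<Rightarrow> 'g topology"
    and H :: "'i \<Rightarrow> 'g set" and Y :: "'y topology" and act :: "('i \<Rightarrow> 'g) \<Rightarrow> 'y \<Rightarrow> 'y"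
  assumes group: "\<And>i. i \<in> I \<Longrightarrow> group (G i)"
    and topspace_T: "\<And>i. i \<in> I \<Longrightarrow> topspace (T i) = carrier (G i)"
    and subgroup: "\<And>i. i \<in> I \<Longrightarrow> subgroup (H i) (G i)"
    and flow: "flow ((product_group I G)\<lparr>carrier := PiE I H\<rparr>)
                 (subtopology (product_topology T I) (PiE I H)) Y act"
begin

(* (\<one>\<^bsub>product_group I G\<^esub>)(k := a) is the copy of a \<in> H k in the k-th factor, and
   PiE I (\<lambda>i. if i \<in> J then H i else {\<one>\<^bsub>G i\<^esub>}) consists of the elements supported in J. *)

lemma PiE_subgroups_subset_carrier: "PiE I H \<subseteq> carrier (product_group I G)"
  using subgroup.subset[OF subgroup] by (auto simp: PiE_iff)

lemma topspace_subtopology_PiE_subgroups: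
  "topspace (subtopology (product_topology T I) (PiE I H)) = PiE I H"
  using PiE_subgroups_subset_carrier topspace_T by (auto simp: PiE_iff)

lemma flow_product_factor:
  assumes "k \<in> I"
  shows "flow (G k\<lparr>carrier := H k\<rparr>) (subtopology (T k) (H k)) Y
           (\<lambda>a. act ((\<one>\<^bsub>product_group I G\<^esub>)(k := a)))"
proof (rule flow_pullback[OF flow])
  show "(\<lambda>a. (\<one>\<^bsub>product_group I G\<^esub>)(k := a)) \<in> carrier (G k\<lparr>carrier := H k\<rparr>) \<rightarrow>
          carrier ((product_group I G)\<lparr>carrier := PiE I H\<rparr>)"
  proof
    fix a assume "a \<in> carrier (G k\<lparr>carrier := H k\<rparr>)"
    then show "(\<one>\<^bsub>product_group I G\<^esub>)(k := a) \<in> carrier ((product_group I G)\<lparr>carrier := PiE I H\<rparr>)"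
      using assms subgroup.one_closed[OF subgroup] by (auto simp: PiE_iff extensional_def)
  qed
  show "(\<one>\<^bsub>product_group I G\<^esub>)(k := \<one>\<^bsub>G k\<lparr>carrier := H k\<rparr>\<^esub>)
          = \<one>\<^bsub>(product_group I G)\<lparr>carrier := PiE I H\<rparr>\<^esub>"
    using assms by (auto simp: fun_eq_iff)
  show "(\<one>\<^bsub>product_group I G\<^esub>)(k := a \<otimes>\<^bsub>G k\<lparr>carrier := H k\<rparr>\<^esub> b)
          = (\<one>\<^bsub>product_group I G\<^esub>)(k := a) \<otimes>\<^bsub>(product_group I G)\<lparr>carrier := PiE I H\<rparr>\<^esub>
            (\<one>\<^bsub>product_group I G\<^esub>)(k := b)"
    if "a \<in> carrier (G k\<lparr>carrier := H k\<rparr>)" "b \<in> carrier (G k\<lparr>carrier := H k\<rparr>)" for a b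
    using assms that group subgroup.mem_carrier[OF subgroup]
    by (auto simp: fun_eq_iff group.is_monoid monoid.l_one)
  have "continuous_map (subtopology (T k) (H k)) (product_topology (\<lambda>i. subtopology (T i) (H i)) I)
          (\<lambda>a. (\<one>\<^bsub>product_group I G\<^esub>)(k := a))"
    unfolding continuous_map_componentwise
  proof (intro conjI ballI)
    fix i assume "i \<in> I"
    then show "continuous_map (subtopology (T k) (H k)) (subtopology (T i) (H i))
                 (\<lambda>a. ((\<one>\<^bsub>product_group I G\<^esub>)(k := a)) i)"
      using topspace_T group subgroup.one_closed[OF subgroup] by (auto simp: group.is_monoid monoid.one_closed)
  qed (use assms in \<open>auto simp: extensional_def\<close>)
  then show "continuous_map (subtopology (T k) (H k)) (subtopology (product_topology T I) (PiE I H))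
               (\<lambda>a. (\<one>\<^bsub>product_group I G\<^esub>)(k := a))"
    by (simp add: subtopology_product_topology)
qed

lemma PiE_support_subset: "PiE I (\<lambda>i. if i \<in> J then H i else {\<one>\<^bsub>G i\<^esub>}) \<subseteq> PiE I H"
  using subgroup.one_closed[OF subgroup] by (intro PiE_mono) auto

lemma closedin_fixed_points_support:
  "closedin Y (fixed_points Y act (PiE I (\<lambda>i. if i \<in> J then H i else {\<one>\<^bsub>G i\<^esub>})))"
  by (rule closedin_fixed_points[OF flow])
    (simp only: topspace_subtopology_PiE_subgroups PiE_support_subset)

lemma fixed_points_support_invariant:
  assumes "k \<in> I" "k \<notin> J" "a \<in> H k"
    and y: "y \<in> fixed_points Y act (PiE I (\<lambda>i. if i \<in> J then H i else {\<one>\<^bsub>G i\<^esub>}))"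
  shows "act ((\<one>\<^bsub>product_group I G\<^esub>)(k := a)) y
           \<in> fixed_points Y act (PiE I (\<lambda>i. if i \<in> J then H i else {\<one>\<^bsub>G i\<^esub>}))"
proof -
  let ?e = "(\<one>\<^bsub>product_group I G\<^esub>)(k := a)"
  have e: "?e \<in> PiE I H"
    using assms(1,3) subgroup.one_closed[OF subgroup] by (auto simp: PiE_iff extensional_def)
  have y_top: "y \<in> topspace Y"
    using y by (simp add: fixed_points_def)
  have "act h (act ?e y) = act ?e y" if h: "h \<in> PiE I (\<lambda>i. if i \<in> J then H i else {\<one>\<^bsub>G i\<^esub>})" for h
  proof -
    have hH: "h \<in> PiE I H"
      using h PiE_support_subset by blast
    moreover have "h k = \<one>\<^bsub>G k\<^esub>"
      using h assms(1,2) by (auto simp: PiE_iff)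
    moreover have "a \<in> carrier (G k)"
      using assms(1,3) subgroup.mem_carrier[OF subgroup] by blast
    moreover have "h \<in> carrier (product_group I G)"
      using hH PiE_subgroups_subset_carrier by blast
    ultimately have commute: "h \<otimes>\<^bsub>product_group I G\<^esub> ?e = ?e \<otimes>\<^bsub>product_group I G\<^esub> h"
      using product_group_mult_one_upd[of I G k h a] group assms(1)
      by (simp add: group.is_monoid monoid.l_one monoid.r_one)
    have "act h (act ?e y) = act (h \<otimes>\<^bsub>product_group I G\<^esub> ?e) y"
      using flow_act_mult[OF flow, of h ?e y] hH e y_top by simp
    also have "\<dots> = act ?e (act h y)"
      using flow_act_mult[OF flow, of ?e h y] hH e y_top commute by simp
    also have "\<dots> = act ?e y"
      using y h by (simp add: fixed_points_def)
    finally show ?thesis .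
  qed
  moreover have "act ?e y \<in> topspace Y"
    using flow_act_closed[OF flow, of ?e y] e y_top by simp
  ultimately show ?thesis
    by (simp add: fixed_points_def)
qed

lemma fixed_points_support_insertI:
  assumes k: "k \<in> I"
    and z: "z \<in> fixed_points Y act (PiE I (\<lambda>i. if i \<in> J then H i else {\<one>\<^bsub>G i\<^esub>}))"
    and fixed: "\<And>a. a \<in> H k \<Longrightarrow> act ((\<one>\<^bsub>product_group I G\<^esub>)(k := a)) z = z"
  shows "z \<in> fixed_points Y act (PiE I (\<lambda>i. if i \<in> insert k J then H i else {\<one>\<^bsub>G i\<^esub>}))"
  unfolding fixed_points_def
proof (intro CollectI conjI ballI)
  show z_top: "z \<in> topspace Y"
    using z by (simp add: fixed_points_def)
  fix h assume h: "h \<in> PiE I (\<lambda>i. if i \<in> insert k J then H i else {\<one>\<^bsub>G i\<^esub>})"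
  define h' where "h' = h(k := \<one>\<^bsub>G k\<^esub>)"
  have hk: "h k \<in> H k" and h'J: "h' \<in> PiE I (\<lambda>i. if i \<in> J then H i else {\<one>\<^bsub>G i\<^esub>})"
    using h k subgroup.one_closed[OF subgroup] by (auto simp: h'_def PiE_iff extensional_def)
  have h'H: "h' \<in> PiE I H"
    using h'J PiE_support_subset by blast
  have decompose: "h = h' \<otimes>\<^bsub>product_group I G\<^esub> (\<one>\<^bsub>product_group I G\<^esub>)(k := h k)"
    using product_group_mult_one_upd(1)[of I G k h' "h k"] group k h'H PiE_subgroups_subset_carrier
      subgroup.mem_carrier[OF subgroup[OF k] hk]
    by (auto simp: h'_def group.is_monoid monoid.l_one)
  have "(\<one>\<^bsub>product_group I G\<^esub>)(k := h k) \<in> PiE I H"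
    using k hk subgroup.one_closed[OF subgroup] by (auto simp: PiE_iff extensional_def)
  then have "act (h' \<otimes>\<^bsub>product_group I G\<^esub> (\<one>\<^bsub>product_group I G\<^esub>)(k := h k)) z
               = act h' (act ((\<one>\<^bsub>product_group I G\<^esub>)(k := h k)) z)"
    using flow_act_mult[OF flow] h'H z_top by (simp del: mult_product_group)
  then have "act h z = act h' (act ((\<one>\<^bsub>product_group I G\<^esub>)(k := h k)) z)"
    by (subst decompose)
  also have "\<dots> = z"
    using fixed[OF hk] z h'J by (simp add: fixed_points_def)
  finally show "act h z = z" .
qed

lemma fixed_points_support_insert:
  assumes k: "k \<in> I" "k \<notin> J" and amenable: "extremely_amenable_subgroup (G k) (T k) (H k)"
    and y: "y \<in> fixed_points Y act (PiE I (\<lambda>i. if i \<in> J then H i else {\<one>\<^bsub>G i\<^esub>}))"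
  obtains z where "z \<in> fixed_points Y act (PiE I (\<lambda>i. if i \<in> insert k J then H i else {\<one>\<^bsub>G i\<^esub>}))"
proof -
  let ?F = "fixed_points Y act (PiE I (\<lambda>i. if i \<in> J then H i else {\<one>\<^bsub>G i\<^esub>}))"
  let ?orbit = "(\<lambda>a. act ((\<one>\<^bsub>product_group I G\<^esub>)(k := a)) y) ` H k"
  define C where "C = Y closure_of ?orbit"
  have y_top: "y \<in> topspace Y"
    using y by (simp add: fixed_points_def)
  have monoid: "monoid (G k\<lparr>carrier := H k\<rparr>)"
    using subgroup.subgroup_is_group[OF subgroup group] k(1) group.is_monoid by blast
  have topspace: "topspace (subtopology (T k) (H k)) = carrier (G k\<lparr>carrier := H k\<rparr>)"
    using topspace_T subgroup.subset[OF subgroup] k(1) by auto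
  have flow_C: "flow (G k\<lparr>carrier := H k\<rparr>) (subtopology (T k) (H k)) (subtopology Y C)
                  (\<lambda>a. act ((\<one>\<^bsub>product_group I G\<^esub>)(k := a)))"
    and dense_C: "subtopology Y C closure_of ?orbit = topspace (subtopology Y C)"
    using flow_orbit_closure[OF flow_product_factor[OF k(1)] monoid topspace y_top]
    by (simp_all add: C_def)
  have "(\<one>\<^bsub>product_group I G\<^esub>)(k := \<one>\<^bsub>G k\<^esub>) = \<one>\<^bsub>product_group I G\<^esub>"
    using k(1) by (auto simp: fun_eq_iff)
  then have "y \<in> ?orbit"
    using subgroup.one_closed[OF subgroup[OF k(1)]] flow_act_one[OF flow y_top]
    by (intro image_eqI[where x="\<one>\<^bsub>G k\<^esub>"]) simp_all
  moreover have "?orbit \<subseteq> topspace Y"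
    using flow_act_closed[OF flow_product_factor[OF k(1)] _ y_top] by auto
  ultimately have "y \<in> C"
    unfolding C_def using closure_of_subset by blast
  moreover have "topspace (subtopology Y C) = C"
    by (simp add: C_def closure_of_subset_topspace Int_absorb1)
  ultimately obtain z where z: "z \<in> C" "\<And>a. a \<in> H k \<Longrightarrow> act ((\<one>\<^bsub>product_group I G\<^esub>)(k := a)) z = z"
    using extremely_amenable_subgroup_fixed_point[OF amenable flow_C _ dense_C] by metis
  have "?orbit \<subseteq> ?F"
    using fixed_points_support_invariant[OF k _ y] by blast
  then have "C \<subseteq> ?F"
    unfolding C_def using closedin_fixed_points_support by (rule closure_of_minimal)
  then have zF: "z \<in> ?F"
    using z(1) by blast
  show thesis
    by (rule that[OF fixed_points_support_insertI[OF k(1) zF z(2)]])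
qed

lemma fixed_points_finite_support_nonempty:
  assumes amenable: "\<And>i. i \<in> I \<Longrightarrow> extremely_amenable_subgroup (G i) (T i) (H i)"
    and "finite J" "J \<subseteq> I"
  shows "fixed_points Y act (PiE I (\<lambda>i. if i \<in> J then H i else {\<one>\<^bsub>G i\<^esub>})) \<noteq> {}"
  using assms(2,3)
proof (induction J rule: finite_induct)
  case empty
  have "PiE I (\<lambda>i. if i \<in> {} then H i else {\<one>\<^bsub>G i\<^esub>}) = {\<one>\<^bsub>product_group I G\<^esub>}"
    by (simp add: PiE_eq_singleton)
  moreover have "topspace Y \<noteq> {}"
    by (rule flow_topspace_nonempty[OF flow])
  ultimately show ?case
    using flow_act_one[OF flow] by (auto simp: fixed_points_def)
next
  case (insert k J)
  then have "k \<in> I" "J \<subseteq> I"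
    by auto
  with insert.IH obtain y where "y \<in> fixed_points Y act (PiE I (\<lambda>i. if i \<in> J then H i else {\<one>\<^bsub>G i\<^esub>}))"
    by blast
  then obtain z where "z \<in> fixed_points Y act (PiE I (\<lambda>i. if i \<in> insert k J then H i else {\<one>\<^bsub>G i\<^esub>}))"
    using fixed_points_support_insert[OF \<open>k \<in> I\<close> insert.hyps(2) amenable[OF \<open>k \<in> I\<close>]] by blast
  then show ?case
    by blast
qed

lemma fixed_point_finite_supports:
  assumes amenable: "\<And>i. i \<in> I \<Longrightarrow> extremely_amenable_subgroup (G i) (T i) (H i)"
  obtains y where
    "\<And>J. finite J \<Longrightarrow> J \<subseteq> I \<Longrightarrow> y \<in> fixed_points Y act (PiE I (\<lambda>i. if i \<in> J then H i else {\<one>\<^bsub>G i\<^esub>}))"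
proof -
  define F where "F J = fixed_points Y act (PiE I (\<lambda>i. if i \<in> J then H i else {\<one>\<^bsub>G i\<^esub>}))" for J
  have closed: "\<forall>C\<in>F ` {J. finite J \<and> J \<subseteq> I}. closedin Y C"
  proof
    fix C assume "C \<in> F ` {J. finite J \<and> J \<subseteq> I}"
    then obtain J where "C = F J"
      by blast
    then show "closedin Y C"
      by (simp only: F_def closedin_fixed_points_support)
  qed
  have antimono: "F J' \<subseteq> F J" if "J \<subseteq> J'" for J J'
    unfolding F_def using that subgroup.one_closed[OF subgroup]
    by (intro fixed_points_antimono PiE_mono) auto
  have finite_intersections: "\<forall>\<F>. finite \<F> \<and> \<F> \<subseteq> F ` {J. finite J \<and> J \<subseteq> I} \<longrightarrow> \<Inter> \<F> \<noteq> {}"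
  proof (intro allI impI)
    fix \<F> assume "finite \<F> \<and> \<F> \<subseteq> F ` {J. finite J \<and> J \<subseteq> I}"
    then have "\<exists>\<J>\<subseteq>{J. finite J \<and> J \<subseteq> I}. finite \<J> \<and> \<F> = F ` \<J>"
      by (intro finite_subset_image) auto
    then obtain \<J> where \<J>: "\<J> \<subseteq> {J. finite J \<and> J \<subseteq> I}" "finite \<J>" "\<F> = F ` \<J>"
      by blast
    have "F (\<Union> \<J>) \<subseteq> \<Inter> \<F>"
      unfolding \<J>(3) using antimono by (intro INF_greatest) (simp add: Union_upper)
    moreover have "F (\<Union> \<J>) \<noteq> {}"
      unfolding F_def using \<J>(1,2) by (intro fixed_points_finite_support_nonempty amenable) auto
    ultimately show "\<Inter> \<F> \<noteq> {}"
      by blast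
  qed
  have "compact_space Y"
    using flow by (simp add: flow_def)
  then have "\<Inter> (F ` {J. finite J \<and> J \<subseteq> I}) \<noteq> {}"
    using compact_space_fip[THEN iffD1, rule_format, OF _ conjI[OF closed finite_intersections]] by blast
  then obtain y where y: "y \<in> \<Inter> (F ` {J. finite J \<and> J \<subseteq> I})"
    by blast
  show thesis
  proof (rule that)
    fix J assume "finite J" "J \<subseteq> I"
    with y show "y \<in> fixed_points Y act (PiE I (\<lambda>i. if i \<in> J then H i else {\<one>\<^bsub>G i\<^esub>}))"
      unfolding F_def by blast
  qed
qed

lemma product_extremely_amenable_fixed_point:
  assumes amenable: "\<And>i. i \<in> I \<Longrightarrow> extremely_amenable_subgroup (G i) (T i) (H i)"
  obtains y where "y \<in> topspace Y" "\<And>h. h \<in> PiE I H \<Longrightarrow> act h y = y"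
proof (rule fixed_point_finite_supports[OF amenable])
  fix y assume y:
    "\<And>J. finite J \<Longrightarrow> J \<subseteq> I \<Longrightarrow> y \<in> fixed_points Y act (PiE I (\<lambda>i. if i \<in> J then H i else {\<one>\<^bsub>G i\<^esub>}))"
  have y_top: "y \<in> topspace Y"
    using y[of "{}"] by (simp add: fixed_points_def)
  let ?\<Pi> = "subtopology (product_topology T I) (PiE I H)"
  have "{h \<in> topspace ?\<Pi>. finite {i \<in> I. h i \<noteq> \<one>\<^bsub>product_group I G\<^esub> i}} \<subseteq> {h \<in> topspace ?\<Pi>. act h y = y}"
  proof clarify
    fix h assume h: "h \<in> topspace ?\<Pi>" "finite {i \<in> I. h i \<noteq> \<one>\<^bsub>product_group I G\<^esub> i}"
    let ?J = "{i \<in> I. h i \<noteq> \<one>\<^bsub>G i\<^esub>}"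
    have "?J = {i \<in> I. h i \<noteq> \<one>\<^bsub>product_group I G\<^esub> i}"
      by auto
    then have "y \<in> fixed_points Y act (PiE I (\<lambda>i. if i \<in> ?J then H i else {\<one>\<^bsub>G i\<^esub>}))"
      using h(2) by (intro y) auto
    moreover have "h \<in> PiE I (\<lambda>i. if i \<in> ?J then H i else {\<one>\<^bsub>G i\<^esub>})"
      using h(1) by (auto simp: topspace_subtopology_PiE_subgroups PiE_iff)
    ultimately show "act h y = y"
      by (simp add: fixed_points_def)
  qed
  then have "?\<Pi> closure_of {h \<in> topspace ?\<Pi>. finite {i \<in> I. h i \<noteq> \<one>\<^bsub>product_group I G\<^esub> i}}
               \<subseteq> {h \<in> topspace ?\<Pi>. act h y = y}"
    using closedin_stabilizer[OF flow y_top] by (rule closure_of_minimal)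
  moreover have "\<one>\<^bsub>product_group I G\<^esub> \<in> PiE I H"
    using subgroup.one_closed[OF subgroup] by (auto simp: PiE_iff)
  then have "\<one>\<^bsub>product_group I G\<^esub> \<in> topspace ?\<Pi>"
    by (simp only: topspace_subtopology_PiE_subgroups)
  ultimately have "topspace ?\<Pi> \<subseteq> {h \<in> topspace ?\<Pi>. act h y = y}"
    using closure_of_finite_support[of "\<one>\<^bsub>product_group I G\<^esub>" "\<lambda>i. subtopology (T i) (H i)" I]
    by (simp add: subtopology_product_topology)
  then show thesis
    unfolding topspace_subtopology_PiE_subgroups using that y_top by blast
qed

end

section \<open>Maps from a coset compactification onto minimal flows\<close>

(* j^-1 : j(G) --> G/H is uniformly continuous, for the unique uniformity of the compact space K
   and the quotient of the right uniformity of G. This is the half of the uniform embedding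
   condition of completion_flow that the argument uses. *)
definition inverse_uniformly_continuous ::
  "'g monoid \<Rightarrow> 'g topology \<Rightarrow> 'g set \<Rightarrow> 'x topology \<Rightarrow> ('g \<Rightarrow> 'x) \<Rightarrow> bool" where
  "inverse_uniformly_continuous G T H K j \<longleftrightarrow>
     (\<forall>U. openin T U \<and> \<one>\<^bsub>G\<^esub> \<in> U \<longrightarrow>
        (\<exists>W. openin (prod_topology K K) W \<and> (\<forall>z\<in>topspace K. (z, z) \<in> W) \<and>
             (\<forall>x\<in>carrier G. \<forall>y\<in>carrier G. (j x, j y) \<in> W \<longrightarrow>
                (\<exists>u\<in>U. \<exists>h\<in>H. x = u \<otimes>\<^bsub>G\<^esub> y \<otimes>\<^bsub>G\<^esub> h))))"

definition coset_compactification ::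
  "'g monoid \<Rightarrow> 'g topology \<Rightarrow> 'g set \<Rightarrow> 'x topology \<Rightarrow> ('g \<Rightarrow> 'x \<Rightarrow> 'x) \<Rightarrow> ('g \<Rightarrow> 'x) \<Rightarrow> bool" where
  "coset_compactification G T H K act j \<longleftrightarrow>
     flow G T K act \<and> j \<in> carrier G \<rightarrow> topspace K \<and>
     (\<forall>g\<in>carrier G. \<forall>x\<in>carrier G. act g (j x) = j (g \<otimes>\<^bsub>G\<^esub> x)) \<and>
     K closure_of (j ` carrier G) = topspace K \<and>
     inverse_uniformly_continuous G T H K j"

lemma completion_flow_imp_coset_compactification:
  "completion_flow G T H K act j \<Longrightarrow> coset_compactification G T H K act j"
  unfolding completion_flow_def coset_compactification_def inverse_uniformly_continuous_def
  by (elim conjE) (intro conjI)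

lemma flow_hom_onto_minimal_flow:
  assumes "flow G T X act" "minimal_flow G T Y actY" "flow_hom G X act Y actY f"
  shows "f ` topspace X = topspace Y"
proof -
  have f: "continuous_map X Y f" and equivariant: "\<And>g x. g \<in> carrier G \<Longrightarrow> x \<in> topspace X \<Longrightarrow> f (act g x) = actY g (f x)"
    using assms(3) by (auto simp: flow_hom_def)
  have "compactin Y (f ` topspace X)"
    using image_compactin[OF _ f] assms(1) by (simp add: flow_def compact_space_def)
  then have closed: "closedin Y (f ` topspace X)"
    using assms(2) by (intro compactin_imp_closedin) (simp_all add: minimal_flow_def flow_def)
  obtain x where x: "x \<in> topspace X"
    using flow_topspace_nonempty[OF assms(1)] by blast
  then have "(\<lambda>g. actY g (f x)) ` carrier G \<subseteq> f ` topspace X"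
    using equivariant flow_act_closed[OF assms(1)] by (auto intro!: image_eqI simp flip: equivariant)
  then have "Y closure_of ((\<lambda>g. actY g (f x)) ` carrier G) \<subseteq> f ` topspace X"
    using closed by (rule closure_of_minimal)
  moreover have "f x \<in> topspace Y"
    using f x by (simp add: continuous_map_def Pi_iff)
  ultimately show ?thesis
    using minimal_flowD(2)[OF assms(2)] f by (auto simp: continuous_map_def)
qed

lemma closedin_graph_imp_continuous_map:
  assumes "compact_space Y" "closedin (prod_topology X Y) \<Gamma>"
    and functional: "\<And>x y1 y2. (x, y1) \<in> \<Gamma> \<Longrightarrow> (x, y2) \<in> \<Gamma> \<Longrightarrow> y1 = y2"
    and total: "\<And>x. x \<in> topspace X \<Longrightarrow> \<exists>y. (x, y) \<in> \<Gamma>"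
  obtains f where "continuous_map X Y f" "\<And>x. x \<in> topspace X \<Longrightarrow> (x, f x) \<in> \<Gamma>"
proof
  define f where "f x = (SOME y. (x, y) \<in> \<Gamma>)" for x
  show graph: "(x, f x) \<in> \<Gamma>" if "x \<in> topspace X" for x
    unfolding f_def using total[OF that] by (rule someI_ex)
  have \<Gamma>_subset: "\<Gamma> \<subseteq> topspace X \<times> topspace Y"
    using closedin_subset[OF assms(2)] by simp
  show "continuous_map X Y f"
    unfolding continuous_map_closedin
  proof (intro conjI allI impI)
    show "f \<in> topspace X \<rightarrow> topspace Y"
      using graph \<Gamma>_subset by blast
    fix C assume "closedin Y C"
    then have "closedin (prod_topology X Y) (\<Gamma> \<inter> (topspace X \<times> C))"
      using assms(2) by (simp add: closedin_Int closedin_prod_Times_iff)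
    then have "closedin X (fst ` (\<Gamma> \<inter> (topspace X \<times> C)))"
      using closed_map_fst[OF assms(1), of X] unfolding closed_map_def by blast
    moreover have "fst ` (\<Gamma> \<inter> (topspace X \<times> C)) = {x \<in> topspace X. f x \<in> C}"
    proof (intro equalityI subsetI)
      fix x assume "x \<in> fst ` (\<Gamma> \<inter> (topspace X \<times> C))"
      then obtain y where "(x, y) \<in> \<Gamma>" "x \<in> topspace X" "y \<in> C"
        by auto
      then show "x \<in> {x \<in> topspace X. f x \<in> C}"
        using functional[OF graph] by auto
    next
      fix x assume "x \<in> {x \<in> topspace X. f x \<in> C}"
      then have "(x, f x) \<in> \<Gamma> \<inter> (topspace X \<times> C)"
        using graph by auto
      then show "x \<in> fst ` (\<Gamma> \<inter> (topspace X \<times> C))"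
        by (rule rev_image_eqI) simp
    qed
    ultimately show "closedin X {x \<in> topspace X. f x \<in> C}"
      by simp
  qed
qed

lemma inverse_uniformly_continuous_neighbourhood:
  assumes "inverse_uniformly_continuous G T H K j" "openin T U" "\<one>\<^bsub>G\<^esub> \<in> U" "x \<in> topspace K"
  obtains N where "openin K N" "x \<in> N"
    "\<And>a b. a \<in> carrier G \<Longrightarrow> b \<in> carrier G \<Longrightarrow> j a \<in> N \<Longrightarrow> j b \<in> N \<Longrightarrow>
       \<exists>u\<in>U. \<exists>h\<in>H. a = u \<otimes>\<^bsub>G\<^esub> b \<otimes>\<^bsub>G\<^esub> h"
proof -
  obtain W where W: "openin (prod_topology K K) W" "\<forall>z\<in>topspace K. (z, z) \<in> W"
    "\<forall>a\<in>carrier G. \<forall>b\<in>carrier G. (j a, j b) \<in> W \<longrightarrow> (\<exists>u\<in>U. \<exists>h\<in>H. a = u \<otimes>\<^bsub>G\<^esub> b \<otimes>\<^bsub>G\<^esub> h)"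
    using assms(1)[unfolded inverse_uniformly_continuous_def, THEN spec[where x=U], THEN mp] assms(2,3)
    by blast
  have "(x, x) \<in> W"
    using W(2) assms(4) by blast
  with W(1) have "\<exists>A A'. openin K A \<and> openin K A' \<and> x \<in> A \<and> x \<in> A' \<and> A \<times> A' \<subseteq> W"
    by (rule openin_prod_topology_alt[THEN iffD1, rule_format])
  then obtain A A' where A: "openin K A" "openin K A'" "x \<in> A" "x \<in> A'" "A \<times> A' \<subseteq> W"
    by blast
  show thesis
  proof (rule that[of "A \<inter> A'"])
    fix a b assume "a \<in> carrier G" "b \<in> carrier G" "j a \<in> A \<inter> A'" "j b \<in> A \<inter> A'"
    with A(5) W(3) show "\<exists>u\<in>U. \<exists>h\<in>H. a = u \<otimes>\<^bsub>G\<^esub> b \<otimes>\<^bsub>G\<^esub> h"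
      by blast
  qed (use A in auto)
qed

lemma closure_orbit_graph_functional:
  assumes G: "group G" "topspace T = carrier G" "H \<subseteq> carrier G"
    and uniform: "inverse_uniformly_continuous G T H K j"
    and Y: "flow G T Y actY" "y0 \<in> topspace Y" "\<forall>h\<in>H. actY h y0 = y0"
    and xy1: "(x, y1) \<in> prod_topology K Y closure_of ((\<lambda>g. (j g, actY g y0)) ` carrier G)"
    and xy2: "(x, y2) \<in> prod_topology K Y closure_of ((\<lambda>g. (j g, actY g y0)) ` carrier G)"
  shows "y1 = y2"
proof (rule ccontr)
  assume "y1 \<noteq> y2"
  have "(x, y1) \<in> topspace (prod_topology K Y)" "(x, y2) \<in> topspace (prod_topology K Y)"
    using xy1 xy2 by (simp_all only: in_closure_of)
  then have x: "x \<in> topspace K" and y12: "y1 \<in> topspace Y" "y2 \<in> topspace Y"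
    by auto
  have "Hausdorff_space Y"
    using Y(1) by (simp add: flow_def)
  then obtain V1 V2 where V: "openin Y V1" "openin Y V2" "y1 \<in> V1" "y2 \<in> V2" "disjnt V1 V2"
    using y12 \<open>y1 \<noteq> y2\<close> unfolding Hausdorff_space_def by blast
  have one: "\<one>\<^bsub>G\<^esub> \<in> topspace T"
    using G(1,2) by (simp add: group.is_monoid monoid.one_closed)
  obtain U1 V1' where U1: "openin T U1" "\<one>\<^bsub>G\<^esub> \<in> U1" "openin Y V1'" "y1 \<in> V1'"
    "\<And>g z. g \<in> U1 \<Longrightarrow> z \<in> V1' \<Longrightarrow> actY g z \<in> V1"
    by (rule flow_act_continuous_at_one[OF Y(1) one V(1,3)]) blast
  obtain U2 V2' where U2: "openin T U2" "\<one>\<^bsub>G\<^esub> \<in> U2" "openin Y V2'" "y2 \<in> V2'"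
    "\<And>g z. g \<in> U2 \<Longrightarrow> z \<in> V2' \<Longrightarrow> actY g z \<in> V2"
    by (rule flow_act_continuous_at_one[OF Y(1) one V(2,4)]) blast
  have "openin T (U1 \<inter> U2)" "\<one>\<^bsub>G\<^esub> \<in> U1 \<inter> U2"
    using U1 U2 by auto
  then obtain N where N: "openin K N" "x \<in> N"
    "\<And>a b. a \<in> carrier G \<Longrightarrow> b \<in> carrier G \<Longrightarrow> j a \<in> N \<Longrightarrow> j b \<in> N \<Longrightarrow>
       \<exists>u\<in>U1 \<inter> U2. \<exists>h\<in>H. a = u \<otimes>\<^bsub>G\<^esub> b \<otimes>\<^bsub>G\<^esub> h"
    by (rule inverse_uniformly_continuous_neighbourhood[OF uniform _ _ x]) blast
  have pick: "\<exists>g\<in>carrier G. j g \<in> N \<and> actY g y0 \<in> V'"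
    if xy: "(x, y) \<in> prod_topology K Y closure_of ((\<lambda>g. (j g, actY g y0)) ` carrier G)"
      and V': "openin Y V'" "y \<in> V'" for y V'
  proof -
    have "openin (prod_topology K Y) (N \<times> V')" "(x, y) \<in> N \<times> V'"
      using N(1,2) V' by (simp_all add: openin_prod_Times_iff)
    then obtain p where "p \<in> (\<lambda>g. (j g, actY g y0)) ` carrier G" "p \<in> N \<times> V'"
      using xy[unfolded in_closure_of, THEN conjunct2, rule_format, of "N \<times> V'"] by blast
    then show ?thesis
      by blast
  qed
  obtain g where g: "g \<in> carrier G" "j g \<in> N" "actY g y0 \<in> V1'"
    using pick[OF xy1 U1(3,4)] by blast
  obtain g' where g': "g' \<in> carrier G" "j g' \<in> N" "actY g' y0 \<in> V2'"
    using pick[OF xy2 U2(3,4)] by blast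
  obtain u h where u: "u \<in> U1 \<inter> U2" and h: "h \<in> H" and g_eq: "g = u \<otimes>\<^bsub>G\<^esub> g' \<otimes>\<^bsub>G\<^esub> h"
    using N(3)[OF g(1) g'(1) g(2) g'(2)] by blast
  have u_carrier: "u \<in> carrier G"
    using u U1(1) openin_subset G(2) by blast
  have "actY g y0 = actY (u \<otimes>\<^bsub>G\<^esub> g') (actY h y0)"
    unfolding g_eq using flow_act_mult[OF Y(1) _ _ Y(2)] u_carrier g'(1) h G(1,3)
    by (simp add: group.is_monoid monoid.m_closed subsetD)
  also have "\<dots> = actY u (actY g' y0)"
    using Y(3) h flow_act_mult[OF Y(1) u_carrier g'(1) Y(2)] by simp
  finally have "actY g y0 \<in> V2"
    using U2(5) u g'(3) by simp
  moreover have "actY g y0 \<in> V1"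
    using U1(5)[OF U1(2) g(3)] flow_act_one[OF Y(1) flow_act_closed[OF Y(1) g(1) Y(2)]] by simp
  ultimately show False
    using V(5) by (simp add: disjnt_iff)
qed

lemma closure_orbit_graph_invariant:
  assumes "monoid G" "topspace T = carrier G" "flow G T K act"
    and equivariant: "\<forall>g\<in>carrier G. \<forall>x\<in>carrier G. act g (j x) = j (g \<otimes>\<^bsub>G\<^esub> x)"
    and Y: "flow G T Y actY" "y0 \<in> topspace Y"
    and g: "g \<in> carrier G"
    and xy: "(x, y) \<in> prod_topology K Y closure_of ((\<lambda>g. (j g, actY g y0)) ` carrier G)"
  shows "(act g x, actY g y) \<in> prod_topology K Y closure_of ((\<lambda>g. (j g, actY g y0)) ` carrier G)"
proof -
  let ?S = "(\<lambda>g. (j g, actY g y0)) ` carrier G"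
  have "continuous_map (prod_topology K Y) (prod_topology K Y) (\<lambda>(x, y). (act g x, actY g y))"
    using g assms(2)
    by (simp add: continuous_map_prod_top flow_act_continuous[OF assms(3)] flow_act_continuous[OF Y(1)])
  moreover have "(\<lambda>(x, y). (act g x, actY g y)) ` ?S \<subseteq> ?S"
  proof
    fix p assume "p \<in> (\<lambda>(x, y). (act g x, actY g y)) ` ?S"
    then obtain h where h: "h \<in> carrier G" "p = (act g (j h), actY g (actY h y0))"
      by auto
    then have "p = (j (g \<otimes>\<^bsub>G\<^esub> h), actY (g \<otimes>\<^bsub>G\<^esub> h) y0)"
      using g equivariant flow_act_mult[OF Y(1) g h(1) Y(2)] by simp
    moreover have "g \<otimes>\<^bsub>G\<^esub> h \<in> carrier G"
      using assms(1) g h(1) by (rule monoid.m_closed)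
    ultimately show "p \<in> ?S"
      by auto
  qed
  ultimately have "(\<lambda>(x, y). (act g x, actY g y)) ` (prod_topology K Y closure_of ?S)
                     \<subseteq> prod_topology K Y closure_of ?S"
    by (rule image_closure_of_invariant)
  with xy show ?thesis
    by force
qed

lemma coset_compactification_flow_hom:
  assumes G: "group G" "topspace T = carrier G" "H \<subseteq> carrier G"
    and K: "coset_compactification G T H K act j"
    and Y: "flow G T Y actY" "y0 \<in> topspace Y" "\<forall>h\<in>H. actY h y0 = y0"
  obtains f where "flow_hom G K act Y actY f"
proof -
  have flow_K: "flow G T K act" and j: "j \<in> carrier G \<rightarrow> topspace K"
    and equivariant: "\<forall>g\<in>carrier G. \<forall>x\<in>carrier G. act g (j x) = j (g \<otimes>\<^bsub>G\<^esub> x)"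
    and dense: "K closure_of (j ` carrier G) = topspace K"
    and uniform: "inverse_uniformly_continuous G T H K j"
    using K unfolding coset_compactification_def by blast+
  define S where "S = (\<lambda>g. (j g, actY g y0)) ` carrier G"
  define \<Gamma> where "\<Gamma> = prod_topology K Y closure_of S"
  have compact_Y: "compact_space Y"
    using Y(1) by (simp add: flow_def)
  have closed_\<Gamma>: "closedin (prod_topology K Y) \<Gamma>"
    by (simp add: \<Gamma>_def)
  have S_\<Gamma>: "S \<subseteq> \<Gamma>"
    unfolding \<Gamma>_def using j flow_act_closed[OF Y(1) _ Y(2)]
    by (intro closure_of_subset) (auto simp: S_def)
  have functional: "y1 = y2" if "(x, y1) \<in> \<Gamma>" "(x, y2) \<in> \<Gamma>" for x y1 y2
    using closure_orbit_graph_functional[OF G uniform Y] that unfolding \<Gamma>_def S_def .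
  have "closedin K (fst ` \<Gamma>)"
    using closed_map_fst[OF compact_Y, of K] closed_\<Gamma> unfolding closed_map_def by blast
  moreover have "j ` carrier G \<subseteq> fst ` \<Gamma>"
    using S_\<Gamma> unfolding S_def by force
  ultimately have "topspace K \<subseteq> fst ` \<Gamma>"
    using closure_of_minimal dense by metis
  then have total: "\<exists>y. (x, y) \<in> \<Gamma>" if "x \<in> topspace K" for x
    using that by force
  obtain f where f: "continuous_map K Y f" "\<And>x. x \<in> topspace K \<Longrightarrow> (x, f x) \<in> \<Gamma>"
  proof (rule closedin_graph_imp_continuous_map[OF compact_Y closed_\<Gamma>])
    show "y1 = y2" if "(x, y1) \<in> \<Gamma>" "(x, y2) \<in> \<Gamma>" for x y1 y2
      using that by (rule functional)
    show "\<exists>y. (x, y) \<in> \<Gamma>" if "x \<in> topspace K" for x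
      using that by (rule total)
  qed blast
  have "f (act g x) = actY g (f x)" if "g \<in> carrier G" "x \<in> topspace K" for g x
  proof (rule functional)
    show "(act g x, f (act g x)) \<in> \<Gamma>"
      using f(2) flow_act_closed[OF flow_K that] .
    show "(act g x, actY g (f x)) \<in> \<Gamma>"
      using closure_orbit_graph_invariant[OF group.is_monoid[OF G(1)] G(2) flow_K equivariant Y(1,2) that(1)]
        f(2)[OF that(2)]
      unfolding \<Gamma>_def S_def .
  qed
  with f(1) have "flow_hom G K act Y actY f"
    by (simp add: flow_hom_def)
  then show thesis
    by (rule that)
qed

lemma coset_compactification_is_UMF:
  fixes G :: "'g monoid"
  assumes "group G" "topspace T = carrier G" "H \<subseteq> carrier G"
    and "coset_compactification G T H K act j" "minimal_flow G T K act"
    and fixed_point: "\<And>(Y :: 'g set set topology) actY. minimal_flow G T Y actY \<Longrightarrow>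
                        \<exists>y0\<in>topspace Y. \<forall>h\<in>H. actY h y0 = y0"
  shows "is_UMF G T K act"
  unfolding is_UMF_def
proof (intro conjI allI impI)
  fix Y :: "'g set set topology" and actY
  assume Y: "minimal_flow G T Y actY"
  then obtain y0 where "y0 \<in> topspace Y" "\<forall>h\<in>H. actY h y0 = y0"
    using fixed_point by blast
  then obtain f where "flow_hom G K act Y actY f"
    using coset_compactification_flow_hom[OF assms(1-4) minimal_flowD(1)[OF Y]] by blast
  with minimal_flowD(1)[OF assms(5)] Y show "\<exists>f. flow_hom G K act Y actY f \<and> f ` topspace K = topspace Y"
    using flow_hom_onto_minimal_flow by blast
qed (rule assms(5))

section \<open>Products of coset compactifications\<close>

lemma openin_product_entourage:
  assumes "finite J" "J \<subseteq> I" "\<And>i. i \<in> J \<Longrightarrow> openin (prod_topology (X i) (X i)) (W i)"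
  shows "openin (prod_topology (product_topology X I) (product_topology X I))
           {p \<in> topspace (prod_topology (product_topology X I) (product_topology X I)).
              \<forall>i\<in>J. (fst p i, snd p i) \<in> W i}"
proof -
  let ?XX = "prod_topology (product_topology X I) (product_topology X I)"
  have open_i: "openin ?XX {p \<in> topspace ?XX. (fst p i, snd p i) \<in> W i}" if "i \<in> J" for i
  proof (rule openin_continuous_map_preimage)
    have "i \<in> I"
      using that assms(2) by blast
    have "continuous_map ?XX (X i) (\<lambda>p. fst p i)" "continuous_map ?XX (X i) (\<lambda>p. snd p i)"
      using continuous_map_compose[OF continuous_map_fst continuous_map_product_projection[OF \<open>i \<in> I\<close>]]
        continuous_map_compose[OF continuous_map_snd continuous_map_product_projection[OF \<open>i \<in> I\<close>]]
      by (simp_all add: o_def)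
    then show "continuous_map ?XX (prod_topology (X i) (X i)) (\<lambda>p. (fst p i, snd p i))"
      by (rule continuous_map_pairedI)
    show "openin (prod_topology (X i) (X i)) (W i)"
      using that by (rule assms(3))
  qed
  have "{p \<in> topspace ?XX. \<forall>i\<in>J. (fst p i, snd p i) \<in> W i}
          = topspace ?XX \<inter> \<Inter> ((\<lambda>i. {p \<in> topspace ?XX. (fst p i, snd p i) \<in> W i}) ` J)"
    by auto
  also have "openin ?XX \<dots>"
    using assms(1) open_i by (intro openin_Int_Inter finite_imageI openin_topspace) blast+
  finally show ?thesis .
qed

lemma product_group_factorization:
  assumes group: "\<And>i. i \<in> I \<Longrightarrow> group (G i)" and one: "\<And>i. i \<in> I \<Longrightarrow> \<one>\<^bsub>G i\<^esub> \<in> H i"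
    and xy: "x \<in> carrier (product_group I G)" "y \<in> carrier (product_group I G)"
    and free: "\<And>i. i \<in> I - J \<Longrightarrow> B i = carrier (G i)"
    and factor: "\<And>i. i \<in> I \<inter> J \<Longrightarrow> \<exists>u\<in>B i. \<exists>h\<in>H i. x i = u \<otimes>\<^bsub>G i\<^esub> y i \<otimes>\<^bsub>G i\<^esub> h"
  shows "\<exists>u\<in>PiE I B. \<exists>h\<in>PiE I H. x = u \<otimes>\<^bsub>product_group I G\<^esub> y \<otimes>\<^bsub>product_group I G\<^esub> h"
proof -
  have "\<exists>u\<in>B i. \<exists>h\<in>H i. x i = u \<otimes>\<^bsub>G i\<^esub> y i \<otimes>\<^bsub>G i\<^esub> h" if "i \<in> I" for i
  proof (cases "i \<in> J")
    case True
    with factor that show ?thesis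
      by blast
  next
    case False
    interpret group "G i"
      by (rule group[OF that])
    have "x i \<in> carrier (G i)" "y i \<in> carrier (G i)"
      using that xy by (auto simp: PiE_iff)
    then have "x i \<otimes>\<^bsub>G i\<^esub> inv\<^bsub>G i\<^esub> y i \<in> B i"
      and "x i = (x i \<otimes>\<^bsub>G i\<^esub> inv\<^bsub>G i\<^esub> y i) \<otimes>\<^bsub>G i\<^esub> y i \<otimes>\<^bsub>G i\<^esub> \<one>\<^bsub>G i\<^esub>"
      using free[of i] that False by (simp_all add: m_assoc)
    with one[OF that] show ?thesis
      by blast
  qed
  then obtain u where "\<forall>i\<in>I. u i \<in> B i \<and> (\<exists>h\<in>H i. x i = u i \<otimes>\<^bsub>G i\<^esub> y i \<otimes>\<^bsub>G i\<^esub> h)"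
    using bchoice[of I "\<lambda>i u. u \<in> B i \<and> (\<exists>h\<in>H i. x i = u \<otimes>\<^bsub>G i\<^esub> y i \<otimes>\<^bsub>G i\<^esub> h)"] by blast
  moreover from this obtain h where "\<forall>i\<in>I. h i \<in> H i \<and> x i = u i \<otimes>\<^bsub>G i\<^esub> y i \<otimes>\<^bsub>G i\<^esub> h i"
    using bchoice[of I "\<lambda>i h. h \<in> H i \<and> x i = u i \<otimes>\<^bsub>G i\<^esub> y i \<otimes>\<^bsub>G i\<^esub> h"] by blast
  ultimately have "restrict u I \<in> PiE I B" "restrict h I \<in> PiE I H"
    and "x = restrict u I \<otimes>\<^bsub>product_group I G\<^esub> y \<otimes>\<^bsub>product_group I G\<^esub> restrict h I"
    using xy(1) by (auto simp: fun_eq_iff PiE_iff extensional_def)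
  then show ?thesis
    by blast
qed

lemma inverse_uniformly_continuous_product:
  assumes group: "\<And>i. i \<in> I \<Longrightarrow> group (G i)"
    and topspace_T: "\<And>i. i \<in> I \<Longrightarrow> topspace (T i) = carrier (G i)"
    and subgroup: "\<And>i. i \<in> I \<Longrightarrow> subgroup (H i) (G i)"
    and uniform: "\<And>i. i \<in> I \<Longrightarrow> inverse_uniformly_continuous (G i) (T i) (H i) (K i) (j i)"
  shows "inverse_uniformly_continuous (product_group I G) (product_topology T I) (PiE I H)
           (product_topology K I) (\<lambda>g. \<lambda>i\<in>I. j i (g i))"
  unfolding inverse_uniformly_continuous_def
proof (intro allI impI)
  fix U assume "openin (product_topology T I) U \<and> \<one>\<^bsub>product_group I G\<^esub> \<in> U"
  then have "\<exists>B. finite {i \<in> I. B i \<noteq> topspace (T i)} \<and> (\<forall>i\<in>I. openin (T i) (B i)) \<and>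
               \<one>\<^bsub>product_group I G\<^esub> \<in> PiE I B \<and> PiE I B \<subseteq> U"
    by (intro openin_product_topology_alt[THEN iffD1, rule_format]) auto
  then obtain B where B: "finite {i \<in> I. B i \<noteq> topspace (T i)}" "\<forall>i\<in>I. openin (T i) (B i)"
    "\<one>\<^bsub>product_group I G\<^esub> \<in> PiE I B" "PiE I B \<subseteq> U"
    by blast
  define J where "J = {i \<in> I. B i \<noteq> topspace (T i)}"
  have "\<forall>i\<in>J. \<exists>W. openin (prod_topology (K i) (K i)) W \<and> (\<forall>z\<in>topspace (K i). (z, z) \<in> W) \<and>
          (\<forall>x\<in>carrier (G i). \<forall>y\<in>carrier (G i). (j i x, j i y) \<in> W \<longrightarrow>
             (\<exists>u\<in>B i. \<exists>h\<in>H i. x = u \<otimes>\<^bsub>G i\<^esub> y \<otimes>\<^bsub>G i\<^esub> h))"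
  proof
    fix i assume "i \<in> J"
    then have i: "i \<in> I" and Bi: "openin (T i) (B i) \<and> \<one>\<^bsub>G i\<^esub> \<in> B i"
      using B(2,3) by (auto simp: J_def PiE_iff)
    show "\<exists>W. openin (prod_topology (K i) (K i)) W \<and> (\<forall>z\<in>topspace (K i). (z, z) \<in> W) \<and>
          (\<forall>x\<in>carrier (G i). \<forall>y\<in>carrier (G i). (j i x, j i y) \<in> W \<longrightarrow>
             (\<exists>u\<in>B i. \<exists>h\<in>H i. x = u \<otimes>\<^bsub>G i\<^esub> y \<otimes>\<^bsub>G i\<^esub> h))"
      using uniform[OF i, unfolded inverse_uniformly_continuous_def, THEN spec[where x="B i"], THEN mp, OF Bi] .
  qed
  from bchoice[OF this] obtain W where W: "\<forall>i\<in>J. openin (prod_topology (K i) (K i)) (W i) \<and>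
      (\<forall>z\<in>topspace (K i). (z, z) \<in> W i) \<and>
      (\<forall>x\<in>carrier (G i). \<forall>y\<in>carrier (G i). (j i x, j i y) \<in> W i \<longrightarrow>
         (\<exists>u\<in>B i. \<exists>h\<in>H i. x = u \<otimes>\<^bsub>G i\<^esub> y \<otimes>\<^bsub>G i\<^esub> h))"
    by (erule exE)
  let ?KK = "prod_topology (product_topology K I) (product_topology K I)"
  define W' where "W' = {p \<in> topspace ?KK. \<forall>i\<in>J. (fst p i, snd p i) \<in> W i}"
  show "\<exists>W. openin ?KK W \<and> (\<forall>z\<in>topspace (product_topology K I). (z, z) \<in> W) \<and>
          (\<forall>x\<in>carrier (product_group I G). \<forall>y\<in>carrier (product_group I G).
             ((\<lambda>i\<in>I. j i (x i)), (\<lambda>i\<in>I. j i (y i))) \<in> W \<longrightarrow>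
             (\<exists>u\<in>U. \<exists>h\<in>PiE I H. x = u \<otimes>\<^bsub>product_group I G\<^esub> y \<otimes>\<^bsub>product_group I G\<^esub> h))"
  proof (intro exI conjI ballI impI)
    have "finite J" "J \<subseteq> I"
      using B(1) by (auto simp: J_def)
    then show "openin ?KK W'"
      unfolding W'_def using W by (intro openin_product_entourage) auto
    show "(z, z) \<in> W'" if "z \<in> topspace (product_topology K I)" for z
      using that W by (auto simp: W'_def J_def PiE_iff)
    fix x y assume xy: "x \<in> carrier (product_group I G)" "y \<in> carrier (product_group I G)"
      and "((\<lambda>i\<in>I. j i (x i)), (\<lambda>i\<in>I. j i (y i))) \<in> W'"
    then have jxy: "(j i (x i), j i (y i)) \<in> W i" if "i \<in> J" for i
      using that by (auto simp: W'_def J_def)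
    have "\<exists>u\<in>PiE I B. \<exists>h\<in>PiE I H. x = u \<otimes>\<^bsub>product_group I G\<^esub> y \<otimes>\<^bsub>product_group I G\<^esub> h"
    proof (rule product_group_factorization[OF group _ xy])
      show "\<one>\<^bsub>G i\<^esub> \<in> H i" if "i \<in> I" for i
        using subgroup[OF that] by (rule subgroup.one_closed)
      show "B i = carrier (G i)" if "i \<in> I - J" for i
        using that topspace_T by (auto simp: J_def)
      show "\<exists>u\<in>B i. \<exists>h\<in>H i. x i = u \<otimes>\<^bsub>G i\<^esub> y i \<otimes>\<^bsub>G i\<^esub> h" if "i \<in> I \<inter> J" for i
        using W jxy[of i] xy that by (auto simp: PiE_iff)
    qed
    then obtain u h where u: "u \<in> PiE I B" and h: "h \<in> PiE I H"
      and x_eq: "x = u \<otimes>\<^bsub>product_group I G\<^esub> y \<otimes>\<^bsub>product_group I G\<^esub> h"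
      by (elim bexE)
    show "\<exists>u\<in>U. \<exists>h\<in>PiE I H. x = u \<otimes>\<^bsub>product_group I G\<^esub> y \<otimes>\<^bsub>product_group I G\<^esub> h"
    proof (intro bexI)
      show "x = u \<otimes>\<^bsub>product_group I G\<^esub> y \<otimes>\<^bsub>product_group I G\<^esub> h"
        by (rule x_eq)
      show "u \<in> U"
        using B(4) u by blast
    qed (rule h)
  qed
qed

lemma coset_compactification_product:
  assumes group: "\<And>i. i \<in> I \<Longrightarrow> group (G i)"
    and topspace_T: "\<And>i. i \<in> I \<Longrightarrow> topspace (T i) = carrier (G i)"
    and subgroup: "\<And>i. i \<in> I \<Longrightarrow> subgroup (H i) (G i)"
    and compactification: "\<And>i. i \<in> I \<Longrightarrow> coset_compactification (G i) (T i) (H i) (K i) (act i) (j i)"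
  shows "coset_compactification (product_group I G) (product_topology T I) (PiE I H)
           (product_topology K I) (product_action I act) (\<lambda>g. \<lambda>i\<in>I. j i (g i))"
proof -
  have flow: "\<And>i. i \<in> I \<Longrightarrow> flow (G i) (T i) (K i) (act i)"
    and j: "\<And>i. i \<in> I \<Longrightarrow> j i \<in> carrier (G i) \<rightarrow> topspace (K i)"
    and equivariant: "\<And>i. i \<in> I \<Longrightarrow> \<forall>g\<in>carrier (G i). \<forall>x\<in>carrier (G i). act i g (j i x) = j i (g \<otimes>\<^bsub>G i\<^esub> x)"
    and dense: "\<And>i. i \<in> I \<Longrightarrow> K i closure_of (j i ` carrier (G i)) = topspace (K i)"
    and uniform: "\<And>i. i \<in> I \<Longrightarrow> inverse_uniformly_continuous (G i) (T i) (H i) (K i) (j i)"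
    using compactification unfolding coset_compactification_def by blast+
  have "(\<lambda>g. \<lambda>i\<in>I. j i (g i)) ` carrier (product_group I G) = PiE I (\<lambda>i. j i ` carrier (G i))"
    by (simp add: image_componentwise_PiE)
  then have "product_topology K I closure_of ((\<lambda>g. \<lambda>i\<in>I. j i (g i)) ` carrier (product_group I G))
               = topspace (product_topology K I)"
    using dense by (simp add: closure_of_product_topology cong: PiE_cong)
  moreover have "(\<lambda>g. \<lambda>i\<in>I. j i (g i)) \<in> carrier (product_group I G) \<rightarrow> topspace (product_topology K I)"
    using j by (auto simp: PiE_iff Pi_iff)
  moreover have "product_action I act g (\<lambda>i\<in>I. j i (x i)) = (\<lambda>i\<in>I. j i ((g \<otimes>\<^bsub>product_group I G\<^esub> x) i))"
    if "g \<in> carrier (product_group I G)" "x \<in> carrier (product_group I G)" for g x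
  proof
    fix i
    show "product_action I act g (\<lambda>i\<in>I. j i (x i)) i = (\<lambda>i\<in>I. j i ((g \<otimes>\<^bsub>product_group I G\<^esub> x) i)) i"
    proof (cases "i \<in> I")
      case True
      then have "g i \<in> carrier (G i)" "x i \<in> carrier (G i)"
        using that by auto
      with True show ?thesis
        using equivariant[OF True] by (simp add: product_action_def)
    qed (simp add: product_action_def)
  qed
  ultimately show ?thesis
    unfolding coset_compactification_def
    using flow_product[OF flow] inverse_uniformly_continuous_product[OF group topspace_T subgroup uniform]
    by (intro conjI ballI) simp_all
qed

theorem proposition3:
  fixes I :: "'i set"
    and G :: "'i \<Rightarrow> 'g monoid" and T :: "'i \<Rightarrow> 'g topology"
    and H :: "'i \<Rightarrow> 'g set"
    and K :: "'i \<Rightarrow> 'x topology" and act :: "'i \<Rightarrow> 'g \<Rightarrow> 'x \<Rightarrow> 'x"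
    and j :: "'i \<Rightarrow> 'g \<Rightarrow> 'x"
  assumes "\<And>i. i \<in> I \<Longrightarrow> hausdorff_topological_group (G i) (T i)"
    and "\<And>i. i \<in> I \<Longrightarrow> subgroup (H i) (G i)"
    and "\<And>i. i \<in> I \<Longrightarrow> closedin (T i) (H i)"
    and "\<And>i. i \<in> I \<Longrightarrow> extremely_amenable_subgroup (G i) (T i) (H i)"
    and "\<And>i. i \<in> I \<Longrightarrow> co_precompact (G i) (T i) (H i)"
    and "\<And>i. i \<in> I \<Longrightarrow> completion_flow (G i) (T i) (H i) (K i) (act i) (j i)"
    and "\<And>i. i \<in> I \<Longrightarrow> is_UMF (G i) (T i) (K i) (act i)"
  shows "is_UMF (product_group I G) (product_topology T I)
                (product_topology K I) (product_action I act)"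
proof -
  have group: "\<And>i. i \<in> I \<Longrightarrow> group (G i)"
    and topspace_T: "\<And>i. i \<in> I \<Longrightarrow> topspace (T i) = carrier (G i)"
    using assms(1) by (simp_all add: hausdorff_topological_group_def topological_group_def)
  have PiE_H: "PiE I H \<subseteq> carrier (product_group I G)"
    using subgroup.subset[of "PiE I H" "product_group I G"] assms(2)
    by (simp add: PiE_subgroup_product_group[OF group])
  show ?thesis
  proof (rule coset_compactification_is_UMF)
    show "group (product_group I G)"
      using group by simp
    show "topspace (product_topology T I) = carrier (product_group I G)"
      using topspace_T by (simp cong: PiE_cong)
    show "minimal_flow (product_group I G) (product_topology T I) (product_topology K I) (product_action I act)"
      using assms(7) unfolding is_UMF_def by (intro minimal_flow_product) blast
    show "coset_compactification (product_group I G) (product_topology T I) (PiE I H)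
            (product_topology K I) (product_action I act) (\<lambda>g. \<lambda>i\<in>I. j i (g i))"
      using coset_compactification_product[OF group topspace_T assms(2)
          completion_flow_imp_coset_compactification[OF assms(6)]] .
    fix Y actY
    assume Y: "minimal_flow (product_group I G) (product_topology T I) Y actY"
    obtain y0 where "y0 \<in> topspace Y" "\<And>h. h \<in> PiE I H \<Longrightarrow> actY h y0 = y0"
      using product_extremely_amenable_fixed_point[OF group topspace_T assms(2)
          flow_restrict[OF minimal_flowD(1)[OF Y] PiE_H] assms(4)]
      by blast
    then show "\<exists>y0\<in>topspace Y. \<forall>h\<in>PiE I H. actY h y0 = y0"
      by blast
  qed (rule PiE_H)
qed

end
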